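(* Let $\mathcal{A},\mathcal{B},\mathcal{C}$ be finite-dimensional complex Hilbert spaces with $\dim\mathcal{C}\geq\dim(\mathcal{A}\otimes\mathcal{B})$. Let $L$ be a subunitary operator on $\mathcal{A}\otimes\mathcal{B}$ (i.e. $\|L\ket{\varphi}\|\leq\|\ket{\varphi}\|$ for all $\ket{\varphi}$). Let $\ket{\xi}\neq 0$ and $\ket{\tau}$ be vectors in $\mathcal{A}\otimes\mathcal{B}\otimes\mathcal{C}$, and let $T\geq 1$ be an integer. Then it is possible to transform $\ket{\xi}\mapsto\ket{\tau}$ in $T$ timesteps (in the sense defined in the context) if and only if there exist positive semidefinite operators $\pi^0,\pi^1,\dots,\pi^{T-1}$ on $\mathcal{A}\otimes\mathcal{B}$ such that $\mathrm{tr}_{\mathcal{B}}\pi^{j+1}=\mathrm{tr}_{\mathcal{B}}\left(L\pi^jL^\dagger\right)$ for all $0\leq j\leq T-2$, $\mathrm{tr}_{\mathcal{B}\mathcal{C}}\ket{\xi}\bra{\xi}=\mathrm{tr}_{\mathcal{B}}\pi^0$, and $\mathrm{tr}_{\mathcal{B}\mathcal{C}}\ket{\tau}\bra{\tau}=\mathrm{tr}_{\mathcal{B}}\left(L\pi^{T-1}L^\dagger\right)$.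
   Context: A $T$-timestep algorithm consists of a choice of unitaries $U_0,U_1,\dots,U_T$ acting on $\mathcal{B}\otimes\mathcal{C}$; it applies the operator $E=(I_{\mathcal{A}}\otimes U_T)(L\otimes I_{\mathcal{C}})(I_{\mathcal{A}}\otimes U_{T-1})(L\otimes I_{\mathcal{C}})\cdots(L\otimes I_{\mathcal{C}})(I_{\mathcal{A}}\otimes U_0)$ (i.e. $L$ is applied exactly $T$ times on $\mathcal{A}\otimes\mathcal{B}$, interleaved with arbitrary unitaries on $\mathcal{B}\otimes\mathcal{C}$; the algorithm never acts directly on $\mathcal{A}$ otherwise). "Transform $\ket{\xi}\mapsto\ket{\tau}$ in $T$ timesteps" means there is such an algorithm with $E\ket{\xi}=\ket{\tau}$. States need not be normalized. $\mathrm{tr}_{\mathcal{B}}$, $\mathrm{tr}_{\mathcal{B}\mathcal{C}}$ denote partial traces over the indicated factors. *)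

theory Defs
  imports Complex_Main
begin

text \<open>Finite-dimensional Hilbert spaces A, B, C are modelled as coordinate spaces
 indexed by finite types 'a, 'b, 'c (orthonormal bases). Vectors are functions
 from the basis index to complex; operators are matrices (row index, column index).\<close>

type_synonym ('i) vec = "'i \<Rightarrow> complex"
type_synonym ('i) op = "'i \<Rightarrow> 'i \<Rightarrow> complex"

definition op_apply :: "('i::finite) op \<Rightarrow> 'i vec \<Rightarrow> 'i vec" where
  "op_apply M v = (\<lambda>i. \<Sum>j\<in>UNIV. M i j * v j)"

definition op_mult :: "('i::finite) op \<Rightarrow> 'i op \<Rightarrow> 'i op" where
  "op_mult M N = (\<lambda>i k. \<Sum>j\<in>UNIV. M i j * N j k)"

definition op_adj :: "'i op \<Rightarrow> 'i op" where
  "op_adj M = (\<lambda>i j. cnj (M j i))"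

definition op_id :: "'i op" where
  "op_id = (\<lambda>i j. if i = j then 1 else 0)"

definition vnorm :: "('i::finite) vec \<Rightarrow> real" where
  "vnorm v = sqrt (\<Sum>i\<in>UNIV. (cmod (v i))\<^sup>2)"

definition unitary_op :: "('i::finite) op \<Rightarrow> bool" where
  "unitary_op U \<longleftrightarrow> op_mult (op_adj U) U = op_id \<and> op_mult U (op_adj U) = op_id"

definition subunitary :: "('i::finite) op \<Rightarrow> bool" where
  "subunitary L \<longleftrightarrow> (\<forall>\<phi>. vnorm (op_apply L \<phi>) \<le> vnorm \<phi>)"

definition psd :: "('i::finite) op \<Rightarrow> bool" where
  "psd M \<longleftrightarrow> (\<forall>v. let q = (\<Sum>i\<in>UNIV. cnj (v i) * op_apply M v i) in Im q = 0 \<and> Re q \<ge> 0)"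

definition ptrace_B :: "('a \<times> 'b::finite) op \<Rightarrow> 'a op" where
  "ptrace_B M = (\<lambda>a a'. \<Sum>b\<in>UNIV. M (a, b) (a', b))"

definition ketbra :: "'i vec \<Rightarrow> 'i op" where
  "ketbra \<xi> = (\<lambda>i j. \<xi> i * cnj (\<xi> j))"

definition ptrace_BC :: "('a \<times> ('b::finite \<times> 'c::finite)) op \<Rightarrow> 'a op" where
  "ptrace_BC M = (\<lambda>a a'. \<Sum>bc\<in>UNIV. M (a, bc) (a', bc))"

text \<open>I_A \<otimes> U for U on B\<otimes>C, and L \<otimes> I_C for L on A\<otimes>B, acting on A\<otimes>B\<otimes>C.\<close>
definition apply_BC :: "('b::finite \<times> 'c::finite) op \<Rightarrow> ('a \<times> 'b \<times> 'c) vec \<Rightarrow> ('a \<times> 'b \<times> 'c) vec" where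
  "apply_BC U v = (\<lambda>(a, b, c). \<Sum>(b', c')\<in>UNIV. U (b, c) (b', c') * v (a, b', c'))"

definition apply_AB :: "('a::finite \<times> 'b::finite) op \<Rightarrow> ('a \<times> 'b \<times> 'c) vec \<Rightarrow> ('a \<times> 'b \<times> 'c) vec" where
  "apply_AB L v = (\<lambda>(a, b, c). \<Sum>(a', b')\<in>UNIV. L (a, b) (a', b') * v (a', b', c))"

text \<open>The operator E of a k-timestep algorithm with unitaries Us 0, ..., Us k applied to v:
  E = (I\<otimes>U_k)(L\<otimes>I)(I\<otimes>U_{k-1}) ... (L\<otimes>I)(I\<otimes>U_0).\<close>
fun run_alg :: "('a::finite \<times> 'b::finite) op \<Rightarrow> (nat \<Rightarrow> ('b \<times> 'c::finite) op) \<Rightarrow> nat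
    \<Rightarrow> ('a \<times> 'b \<times> 'c) vec \<Rightarrow> ('a \<times> 'b \<times> 'c) vec" where
  "run_alg L Us 0 v = apply_BC (Us 0) v"
| "run_alg L Us (Suc k) v = apply_BC (Us (Suc k)) (apply_AB L (run_alg L Us k v))"

definition transformable :: "('a::finite \<times> 'b::finite) op \<Rightarrow> nat
    \<Rightarrow> ('a \<times> 'b \<times> 'c::finite) vec \<Rightarrow> ('a \<times> 'b \<times> 'c) vec \<Rightarrow> bool" where
  "transformable L T \<xi> \<tau> \<longleftrightarrow>
     (\<exists>Us. (\<forall>j\<le>T. unitary_op (Us j)) \<and> run_alg L Us T \<xi> = \<tau>)"

end

theory Submission
  imports Defs
begin

text \<open>
  The marginal on A of a state v, ptrace_BC (ketbra v), is the Gram matrix of the rows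
  v(a, -) in the space of B and C, and also the partial trace over B of the Gram matrix
  pi_v of the columns v(a, b, -) in the space of C; applying L to the A and B factors turns
  pi_v into L pi_v L^dagger.  Two families of at most n vectors in an n-dimensional space
  with the same Gram matrix differ by a unitary (move one vector onto a basis vector by a
  phase and a reflection, then induct on the orthogonal complement of that basis vector),
  and every positive semidefinite matrix of size at most n is the Gram matrix of vectors in
  an n-dimensional space (Cholesky factorisation by Schur complements).  Since dim C is at
  least dim (A \<otimes> B), two states are therefore related by a unitary on B and C iff
  they have the same marginal on A, and every positive semidefinite pi on A and B is pi_w for
  some state w.  So the intermediate states of an algorithm may be chosen freely subject to
  the marginal conditions, with pi^j the column Gram matrix of the j-th state.
\<close>

section \<open>Coordinate vectors and matrices\<close>

definition vinner :: "('i::finite) vec \<Rightarrow> 'i vec \<Rightarrow> complex" where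
  "vinner u v = (\<Sum>x\<in>UNIV. u x * cnj (v x))"

definition basis_vec :: "'i \<Rightarrow> 'i vec" where
  "basis_vec k = (\<lambda>x. of_bool (x = k))"

lemma op_apply_op_mult: "op_apply (op_mult A B) v = op_apply A (op_apply B v)"
  unfolding op_apply_def op_mult_def
  by (rule ext, simp add: sum_distrib_left sum_distrib_right mult.assoc, subst sum.swap, simp)

lemma op_mult_assoc: "op_mult (op_mult A B) C = op_mult A (op_mult B C)"
  unfolding op_mult_def
  by (rule ext)+ (simp add: sum_distrib_left sum_distrib_right mult.assoc, subst sum.swap, simp)

lemma op_apply_op_id [simp]: "op_apply op_id v = v"
  unfolding op_apply_def op_id_def by (simp add: of_bool_def [symmetric])

lemma op_mult_op_id [simp]: "op_mult op_id A = A" "op_mult A op_id = A"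
  unfolding op_mult_def op_id_def by (simp_all add: of_bool_def [symmetric])

lemma op_adj_op_adj [simp]: "op_adj (op_adj A) = A"
  unfolding op_adj_def by simp

lemma op_adj_op_id [simp]: "op_adj op_id = op_id"
  unfolding op_adj_def op_id_def by (simp add: fun_eq_iff)

lemma op_adj_op_mult: "op_adj (op_mult A B) = op_mult (op_adj B) (op_adj A)"
  unfolding op_adj_def op_mult_def by (simp add: mult.commute)

lemma unitary_op_id: "unitary_op op_id"
  unfolding unitary_op_def by simp

lemma unitary_op_adj: "unitary_op U \<Longrightarrow> unitary_op (op_adj U)"
  unfolding unitary_op_def by simp

lemma unitary_op_mult: "unitary_op U \<Longrightarrow> unitary_op V \<Longrightarrow> unitary_op (op_mult U V)"
  unfolding unitary_op_def op_adj_op_mult by (metis op_mult_assoc op_mult_op_id(1))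

lemma op_apply_adj_unitary: "unitary_op U \<Longrightarrow> op_apply (op_adj U) (op_apply U v) = v"
  unfolding unitary_op_def by (metis op_apply_op_id op_apply_op_mult)

lemma op_apply_add: "op_apply M (\<lambda>x. u x + v x) = (\<lambda>x. op_apply M u x + op_apply M v x)"
  unfolding op_apply_def by (simp add: distrib_left sum.distrib)

lemma op_apply_scale: "op_apply M (\<lambda>x. c * u x) = (\<lambda>x. c * op_apply M u x)"
  unfolding op_apply_def by (simp add: sum_distrib_left mult.left_commute)

lemma basis_vec_same [simp]: "basis_vec k k = 1"
  unfolding basis_vec_def by simp

lemma op_apply_basis_vec: "op_apply M (basis_vec k) = (\<lambda>x. M x k)"
  unfolding op_apply_def basis_vec_def by simp

lemma op_eqI: "(\<And>k. op_apply M (basis_vec k) = op_apply N (basis_vec k)) \<Longrightarrow> M = N"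
  unfolding op_apply_basis_vec by (metis ext)

lemma vinner_add_left: "vinner (\<lambda>x. u x + v x) w = vinner u w + vinner v w"
  unfolding vinner_def by (simp add: distrib_right sum.distrib)

lemma vinner_add_right: "vinner w (\<lambda>x. u x + v x) = vinner w u + vinner w v"
  unfolding vinner_def by (simp add: distrib_left sum.distrib)

lemma vinner_diff_left: "vinner (\<lambda>x. u x - v x) w = vinner u w - vinner v w"
  unfolding vinner_def by (simp add: left_diff_distrib sum_subtractf)

lemma vinner_diff_right: "vinner w (\<lambda>x. u x - v x) = vinner w u - vinner w v"
  unfolding vinner_def by (simp add: right_diff_distrib sum_subtractf)

lemma vinner_scale_left: "vinner (\<lambda>x. c * u x) w = c * vinner u w"
  unfolding vinner_def by (simp add: sum_distrib_left mult.assoc)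

lemma vinner_scale_right: "vinner w (\<lambda>x. c * u x) = cnj c * vinner w u"
  unfolding vinner_def by (simp add: sum_distrib_left mult_ac)

lemma vinner_zero [simp]: "vinner (\<lambda>_. 0) u = 0" "vinner u (\<lambda>_. 0) = 0"
  unfolding vinner_def by simp_all

lemma cnj_vinner: "cnj (vinner u v) = vinner v u"
  unfolding vinner_def by (simp add: mult.commute)

lemma vinner_basis_vec_right [simp]: "vinner u (basis_vec k) = u k"
  unfolding vinner_def basis_vec_def of_bool_def
  by (simp add: if_distrib [of cnj] cong: if_cong) (simp add: of_bool_def [symmetric])

lemma vinner_basis_vec_left [simp]: "vinner (basis_vec k) u = cnj (u k)"
  by (metis cnj_vinner vinner_basis_vec_right)

lemma vinner_sum_left: "vinner (\<lambda>x. \<Sum>k\<in>K. f k x) w = (\<Sum>k\<in>K. vinner (f k) w)"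
  unfolding vinner_def by (simp add: sum_distrib_right, rule sum.swap)

lemma vinner_sum_right: "vinner w (\<lambda>x. \<Sum>k\<in>K. f k x) = (\<Sum>k\<in>K. vinner w (f k))"
  unfolding vinner_def by (simp add: cnj_sum sum_distrib_left, rule sum.swap)

lemma vinner_op_apply_left: "vinner (op_apply M u) v = vinner u (op_apply (op_adj M) v)"
  unfolding vinner_def op_apply_def op_adj_def
  by (simp add: sum_distrib_left sum_distrib_right mult_ac, subst sum.swap, simp)

lemma vinner_unitary: "unitary_op U \<Longrightarrow> vinner (op_apply U u) (op_apply U v) = vinner u v"
  unfolding vinner_op_apply_left by (simp add: op_apply_adj_unitary)

lemma vinner_self: "vinner u u = complex_of_real ((vnorm u)\<^sup>2)"
  unfolding vinner_def vnorm_def by (simp add: sum_nonneg complex_norm_square del: of_real_power)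

lemma vinner_self_eq_0_iff: "vinner u u = 0 \<longleftrightarrow> u = (\<lambda>_. 0)"
  unfolding vinner_self of_real_eq_0_iff vnorm_def
  by (simp add: sum_nonneg sum_nonneg_eq_0_iff fun_eq_iff)

lemma vnorm_nonneg: "0 \<le> vnorm u"
  unfolding vnorm_def by (simp add: sum_nonneg)

lemma vnorm_eq_iff_vinner_self: "vnorm u = vnorm v \<longleftrightarrow> vinner u u = vinner v v"
  unfolding vinner_self of_real_eq_iff by (metis power2_eq_iff_nonneg vnorm_nonneg)

section \<open>Unitaries acting on a set of coordinates\<close>

definition supported_on :: "'i set \<Rightarrow> 'i vec \<Rightarrow> bool" where
  "supported_on S v \<longleftrightarrow> (\<forall>x. x \<notin> S \<longrightarrow> v x = 0)"

definition identity_off :: "'i set \<Rightarrow> 'i op \<Rightarrow> bool" where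
  "identity_off S U \<longleftrightarrow> (\<forall>x y. x \<notin> S \<or> y \<notin> S \<longrightarrow> U x y = op_id x y)"

lemma identity_off_op_id: "identity_off S op_id"
  unfolding identity_off_def by simp

lemma identity_off_op_adj: "identity_off S U \<Longrightarrow> identity_off S (op_adj U)"
  unfolding identity_off_def op_adj_def op_id_def by auto

lemma identity_off_mono: "identity_off S U \<Longrightarrow> S \<subseteq> S' \<Longrightarrow> identity_off S' U"
  unfolding identity_off_def by auto

lemma identity_off_op_mult:
  assumes "identity_off S U" "identity_off S V"
  shows "identity_off S (op_mult U V)"
  unfolding identity_off_def
proof (intro allI impI)
  fix x y assume "x \<notin> S \<or> y \<notin> S"
  then consider "x \<notin> S" | "y \<notin> S" by blast
  then show "op_mult U V x y = op_id x y"
  proof cases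
    case 1
    with assms have "op_mult U V x y = op_mult op_id V x y"
      unfolding identity_off_def op_mult_def by simp
    with 1 assms(2) show ?thesis unfolding identity_off_def by simp
  next
    case 2
    with assms have "op_mult U V x y = op_mult U op_id x y"
      unfolding identity_off_def op_mult_def by simp
    with 2 assms(1) show ?thesis unfolding identity_off_def by simp
  qed
qed

lemma supported_on_op_apply:
  assumes "identity_off S U" "supported_on S v"
  shows "supported_on S (op_apply U v)"
proof -
  have "op_apply U v x = op_apply op_id v x" if "x \<notin> S" for x
    using assms that unfolding identity_off_def op_apply_def by simp
  with assms(2) show ?thesis unfolding supported_on_def by simp
qed

lemma op_apply_basis_vec_identity_off:
  "identity_off S U \<Longrightarrow> k \<notin> S \<Longrightarrow> op_apply U (basis_vec k) = basis_vec k"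
  unfolding op_apply_basis_vec unfolding identity_off_def basis_vec_def op_id_def by auto

definition phase_on :: "'i set \<Rightarrow> complex \<Rightarrow> 'i op" where
  "phase_on S c = (\<lambda>x y. if x = y then (if x \<in> S then c else 1) else 0)"

lemma op_apply_phase_on:
  "supported_on S v \<Longrightarrow> op_apply (phase_on S c) v = (\<lambda>x. c * v x)"
  unfolding supported_on_def op_apply_def phase_on_def
  by (auto simp: if_distrib [of "\<lambda>z. z * _"] cong: if_cong)

lemma unitary_phase_on: "cmod c = 1 \<Longrightarrow> unitary_op (phase_on S c)"
  unfolding unitary_op_def op_mult_def op_adj_def phase_on_def op_id_def fun_eq_iff
  by (auto simp: if_distrib [of "\<lambda>z. z * _"] complex_norm_square [symmetric] mult.commute
      cong: if_cong)

lemma identity_off_phase_on: "identity_off S (phase_on S c)"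
  unfolding identity_off_def phase_on_def op_id_def by auto

definition reflection :: "('i::finite) vec \<Rightarrow> 'i op" where
  "reflection u = (\<lambda>x y. op_id x y - 2 / vinner u u * u x * cnj (u y))"

lemma op_apply_reflection:
  "op_apply (reflection u) v = (\<lambda>x. v x - 2 / vinner u u * vinner v u * u x)"
proof -
  have "op_apply (\<lambda>x y. op_id x y - c * u x * cnj (u y)) v = (\<lambda>x. v x - c * vinner v u * u x)" for c
    unfolding op_apply_def vinner_def
    by (simp add: fun_eq_iff algebra_simps sum_subtractf sum_distrib_left op_id_def
        of_bool_def [symmetric])
  then show ?thesis unfolding reflection_def .
qed

lemma op_adj_reflection: "op_adj (reflection u) = reflection u"
proof -
  have "cnj (vinner u u) = vinner u u" by (rule cnj_vinner)
  then show ?thesis unfolding op_adj_def reflection_def op_id_def fun_eq_iff by auto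
qed

text \<open>For u = 0 the division by zero makes the reflection the identity, so it is unitary
  for every u.\<close>
lemma unitary_reflection: "unitary_op (reflection u)"
proof -
  have "op_apply (reflection u) (op_apply (reflection u) v) = v" for v
  proof (cases "vinner u u = 0")
    case False
    then have "vinner (op_apply (reflection u) v) u = - vinner v u"
      unfolding op_apply_reflection vinner_diff_left vinner_scale_left by (simp add: field_simps)
    then show ?thesis
      unfolding op_apply_reflection [of u "op_apply (reflection u) v"]
      by (simp add: op_apply_reflection)
  qed (simp add: op_apply_reflection)
  then have "op_mult (reflection u) (reflection u) = op_id"
    by (intro op_eqI) (simp add: op_apply_op_mult)
  then show ?thesis unfolding unitary_op_def op_adj_reflection by simp
qed

lemma identity_off_reflection: "supported_on S u \<Longrightarrow> identity_off S (reflection u)"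
  unfolding supported_on_def identity_off_def reflection_def by auto

text \<open>A phase on S makes the inner product of x and y real; the reflection in the
  difference of the rotated x and y then maps it to y.\<close>
lemma ex_unitary_identity_off_map_eq_norm:
  assumes "supported_on S x" "supported_on S y" "vinner x x = vinner y y"
  shows "\<exists>U. unitary_op U \<and> identity_off S U \<and> op_apply U x = y"
proof -
  define z where "z = vinner x y"
  define c where "c = (if z = 0 then 1 else complex_of_real (cmod z) / z)"
  have c_norm: "cmod c = 1" and cz: "c * z = complex_of_real (cmod z)"
    unfolding c_def by (simp_all add: norm_divide)
  define w where "w = (\<lambda>i. c * x i)"
  have w: "op_apply (phase_on S c) x = w" unfolding w_def using assms(1) by (rule op_apply_phase_on)
  have ww: "vinner w w = vinner y y"
    using assms(3) unfolding w_def vinner_scale_left vinner_scale_right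
    by (simp add: mult.assoc complex_norm_square [symmetric] c_norm)
  have wy: "vinner w y = complex_of_real (cmod z)"
    unfolding w_def vinner_scale_left z_def [symmetric] by (rule cz)
  then have yw: "vinner y w = vinner w y" by (metis cnj_vinner complex_cnj_complex_of_real)
  define u where "u = (\<lambda>i. w i - y i)"
  have uu: "vinner u u = 2 * (vinner w w - vinner w y)"
    and wu: "vinner w u = vinner w w - vinner w y"
    unfolding u_def vinner_diff_left vinner_diff_right using ww yw by simp_all
  have "op_apply (reflection u) w = y"
  proof (cases "vinner u u = 0")
    case True
    then show ?thesis
      unfolding op_apply_reflection by (simp add: vinner_self_eq_0_iff u_def fun_eq_iff)
  next
    case False
    then show ?thesis unfolding op_apply_reflection wu uu by (simp add: u_def)
  qed
  moreover have "supported_on S u"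
    using assms(1,2) unfolding u_def w_def supported_on_def by simp
  ultimately show ?thesis
    using unitary_phase_on [OF c_norm] identity_off_phase_on w
      unitary_reflection identity_off_reflection
    by (metis identity_off_op_mult op_apply_op_mult unitary_op_mult)
qed

lemma ex_unitary_identity_off_to_basis_vec:
  assumes "supported_on S x" "k \<in> S"
  shows "\<exists>U. unitary_op U \<and> identity_off S U \<and>
    op_apply U x = (\<lambda>i. complex_of_real (vnorm x) * basis_vec k i)"
proof (rule ex_unitary_identity_off_map_eq_norm)
  show "supported_on S (\<lambda>i. complex_of_real (vnorm x) * basis_vec k i)"
    using assms(2) unfolding supported_on_def basis_vec_def by auto
  show "vinner x x = vinner (\<lambda>i. complex_of_real (vnorm x) * basis_vec k i)
      (\<lambda>i. complex_of_real (vnorm x) * basis_vec k i)"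
    using vinner_self [of x] by (simp add: vinner_scale_left vinner_scale_right power2_eq_square)
qed (fact assms(1))

section \<open>Families of vectors with equal Gram matrices\<close>

definition gram :: "('k \<Rightarrow> ('i::finite) vec) \<Rightarrow> 'k op" where
  "gram p = (\<lambda>i j. vinner (p i) (p j))"

definition unitary_equiv_on ::
    "('i::finite) set \<Rightarrow> 'k set \<Rightarrow> ('k \<Rightarrow> 'i vec) \<Rightarrow> ('k \<Rightarrow> 'i vec) \<Rightarrow> bool" where
  "unitary_equiv_on S I p q \<longleftrightarrow>
     (\<exists>U. unitary_op U \<and> identity_off S U \<and> (\<forall>i\<in>I. op_apply U (p i) = q i))"

lemma unitary_equiv_on_op_apply:
  "unitary_op H \<Longrightarrow> identity_off S H \<Longrightarrow> unitary_equiv_on S I p (\<lambda>i. op_apply H (p i))"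
  unfolding unitary_equiv_on_def by blast

lemma unitary_equiv_on_sym: "unitary_equiv_on S I p q \<Longrightarrow> unitary_equiv_on S I q p"
  unfolding unitary_equiv_on_def
  by (metis op_apply_adj_unitary unitary_op_adj identity_off_op_adj)

lemma unitary_equiv_on_trans:
  "unitary_equiv_on S I p q \<Longrightarrow> unitary_equiv_on S I q s \<Longrightarrow> unitary_equiv_on S I p s"
  unfolding unitary_equiv_on_def
  by (metis op_apply_op_mult unitary_op_mult identity_off_op_mult)

lemma unitary_equiv_on_insert_zero:
  "unitary_equiv_on S I p q \<Longrightarrow> p i = (\<lambda>_. 0) \<Longrightarrow> q i = (\<lambda>_. 0) \<Longrightarrow>
    unitary_equiv_on S (insert i I) p q"
  unfolding unitary_equiv_on_def by (auto simp: op_apply_def)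

lemma vinner_fun_upd_zero: "vinner (u(k := 0)) (v(k := 0)) = vinner u v - u k * cnj (v k)"
proof -
  have fun_upd_zero: "u(k := 0) = (\<lambda>x. u x - u k * basis_vec k x)" for u :: "'a vec"
    unfolding basis_vec_def by auto
  show ?thesis
    unfolding fun_upd_zero vinner_diff_left vinner_diff_right vinner_scale_left vinner_scale_right
      vinner_basis_vec_left vinner_basis_vec_right
    by (simp add: basis_vec_def algebra_simps)
qed

lemma op_apply_eq_if_fun_upd_zero:
  assumes "identity_off (S - {k}) U" "op_apply U (u(k := 0)) = v(k := 0)" "u k = v k"
  shows "op_apply U u = v"
proof -
  have split: "w = (\<lambda>x. (w(k := 0)) x + w k * basis_vec k x)" for w :: "'a vec"
    unfolding basis_vec_def by auto
  have "op_apply U u = op_apply U (\<lambda>x. (u(k := 0)) x + u k * basis_vec k x)"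
    by (subst split [of u]) (rule refl)
  also have "\<dots> = (\<lambda>x. op_apply U (u(k := 0)) x + u k * op_apply U (basis_vec k) x)"
    unfolding op_apply_add op_apply_scale ..
  also have "\<dots> = (\<lambda>x. (v(k := 0)) x + v k * basis_vec k x)"
    using assms op_apply_basis_vec_identity_off [OF assms(1)] by simp
  also have "\<dots> = v" by (rule split [symmetric])
  finally show ?thesis .
qed

lemma aligned_family_deflate:
  assumes "\<forall>i\<in>insert i0 I. supported_on S (p i) \<and> supported_on S (q i)"
    and "\<forall>i\<in>insert i0 I. \<forall>j\<in>insert i0 I. vinner (p i) (p j) = vinner (q i) (q j)"
    and "p i0 = (\<lambda>x. r * basis_vec k x)" "q i0 = (\<lambda>x. r * basis_vec k x)" "r \<noteq> 0"
  shows "\<forall>i\<in>I. p i k = q i k"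
    and "\<forall>i\<in>I. supported_on (S - {k}) ((p i)(k := 0)) \<and> supported_on (S - {k}) ((q i)(k := 0))"
    and "\<forall>i\<in>I. \<forall>j\<in>I.
      vinner ((p i)(k := 0)) ((p j)(k := 0)) = vinner ((q i)(k := 0)) ((q j)(k := 0))"
proof -
  show coord: "\<forall>i\<in>I. p i k = q i k"
  proof
    fix i assume "i \<in> I"
    then have "vinner (p i) (p i0) = vinner (q i) (q i0)" using assms(2) by blast
    then show "p i k = q i k" using assms(3-5) by (simp add: vinner_scale_right)
  qed
  show "\<forall>i\<in>I. supported_on (S - {k}) ((p i)(k := 0)) \<and> supported_on (S - {k}) ((q i)(k := 0))"
    using assms(1) unfolding supported_on_def by auto
  show "\<forall>i\<in>I. \<forall>j\<in>I.
      vinner ((p i)(k := 0)) ((p j)(k := 0)) = vinner ((q i)(k := 0)) ((q j)(k := 0))"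
    using assms(2) coord by (simp add: vinner_fun_upd_zero)
qed

lemma unitary_equiv_on_aligned:
  assumes "p i0 = (\<lambda>x. r * basis_vec k x)" "q i0 = (\<lambda>x. r * basis_vec k x)"
    and "\<forall>i\<in>I. p i k = q i k"
    and "unitary_equiv_on (S - {k}) I (\<lambda>i. (p i)(k := 0)) (\<lambda>i. (q i)(k := 0))"
  shows "unitary_equiv_on S (insert i0 I) p q"
proof -
  obtain V where V: "unitary_op V" "identity_off (S - {k}) V"
    "\<forall>i\<in>I. op_apply V ((p i)(k := 0)) = (q i)(k := 0)"
    using assms(4) unfolding unitary_equiv_on_def by blast
  have "op_apply V (p i0) = q i0"
    unfolding assms(1,2) by (simp add: op_apply_scale op_apply_basis_vec_identity_off [OF V(2)])
  moreover have "\<forall>i\<in>I. op_apply V (p i) = q i"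
    using V(2,3) assms(3) by (auto intro: op_apply_eq_if_fun_upd_zero)
  ultimately show ?thesis
    using V(1) identity_off_mono [OF V(2)] unfolding unitary_equiv_on_def by blast
qed

text \<open>Both p i0 and q i0 are moved onto the same multiple of a basis vector e_k; the other
  vectors then agree in coordinate k, and the induction continues on S - {k}.\<close>
lemma unitary_equiv_on_if_vinner_eq:
  assumes "finite I" "card I \<le> card S"
    and "\<forall>i\<in>I. supported_on S (p i) \<and> supported_on S (q i)"
    and "\<forall>i\<in>I. \<forall>j\<in>I. vinner (p i) (p j) = vinner (q i) (q j)"
  shows "unitary_equiv_on S I p q"
  using assms
proof (induction I arbitrary: S p q rule: finite_induct)
  case empty
  show ?case unfolding unitary_equiv_on_def using unitary_op_id identity_off_op_id by blast
next
  case (insert i0 I)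
  show ?case
  proof (cases "p i0 = (\<lambda>_. 0)")
    case True
    then have "q i0 = (\<lambda>_. 0)"
      using insert.prems(3) by (metis insertI1 vinner_self_eq_0_iff vinner_zero(1))
    with True insert show ?thesis
      by (auto intro: unitary_equiv_on_insert_zero simp: subset_insertI)
  next
    case False
    from insert.prems(1) insert.hyps obtain k where k: "k \<in> S" by fastforce
    define r where "r = complex_of_real (vnorm (p i0))"
    have "r \<noteq> 0" using False vinner_self_eq_0_iff [of "p i0"] unfolding r_def vinner_self by auto
    have "vnorm (q i0) = vnorm (p i0)"
      using insert.prems(3) by (simp add: vnorm_eq_iff_vinner_self)
    then obtain Hp Hq where
      Hp: "unitary_op Hp" "identity_off S Hp" "op_apply Hp (p i0) = (\<lambda>x. r * basis_vec k x)" and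
      Hq: "unitary_op Hq" "identity_off S Hq" "op_apply Hq (q i0) = (\<lambda>x. r * basis_vec k x)"
      using ex_unitary_identity_off_to_basis_vec [OF _ k] insert.prems(2) unfolding r_def
      by (metis insertI1)
    define p' q' where "p' i = op_apply Hp (p i)" and "q' i = op_apply Hq (q i)" for i
    have supp': "\<forall>i\<in>insert i0 I. supported_on S (p' i) \<and> supported_on S (q' i)"
      using insert.prems(2) Hp(2) Hq(2) unfolding p'_def q'_def by (simp add: supported_on_op_apply)
    have gram': "\<forall>i\<in>insert i0 I. \<forall>j\<in>insert i0 I.
        vinner (p' i) (p' j) = vinner (q' i) (q' j)"
      using insert.prems(3) Hp(1) Hq(1) unfolding p'_def q'_def by (simp add: vinner_unitary)
    have aligned: "p' i0 = (\<lambda>x. r * basis_vec k x)" "q' i0 = (\<lambda>x. r * basis_vec k x)"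
      unfolding p'_def q'_def by (fact Hp(3) Hq(3))+
    note deflate = aligned_family_deflate [OF supp' gram' aligned \<open>r \<noteq> 0\<close>]
    have "card I \<le> card (S - {k})" using insert.prems(1) insert.hyps k by simp
    then have "unitary_equiv_on S (insert i0 I) p' q'"
      using unitary_equiv_on_aligned [of p' i0 r k q'] aligned deflate(1)
        insert.IH [OF _ deflate(2,3)]
      by blast
    moreover have "unitary_equiv_on S (insert i0 I) p p'" "unitary_equiv_on S (insert i0 I) q q'"
      unfolding p'_def q'_def using Hp(1,2) Hq(1,2) by (auto intro: unitary_equiv_on_op_apply)
    ultimately show ?thesis by (meson unitary_equiv_on_sym unitary_equiv_on_trans)
  qed
qed

lemma ex_unitary_map_if_gram_eq:
  fixes p q :: "'k::finite \<Rightarrow> ('i::finite) vec"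
  assumes "card (UNIV :: 'k set) \<le> card (UNIV :: 'i set)" "gram p = gram q"
  shows "\<exists>U. unitary_op U \<and> (\<forall>k. op_apply U (p k) = q k)"
  using unitary_equiv_on_if_vinner_eq [of UNIV UNIV p q] assms
  unfolding unitary_equiv_on_def gram_def supported_on_def by (auto simp: fun_eq_iff)

section \<open>Positive semidefinite matrices are Gram matrices\<close>

definition psd_on :: "'i set \<Rightarrow> ('i::finite) op \<Rightarrow> bool" where
  "psd_on I M \<longleftrightarrow>
     (\<forall>v. supported_on I v \<longrightarrow>
        Im (vinner (op_apply M v) v) = 0 \<and> 0 \<le> Re (vinner (op_apply M v) v))"

lemma psd_imp_psd_on: "psd M \<Longrightarrow> psd_on I M"
  unfolding psd_def psd_on_def vinner_def Let_def by (simp add: mult.commute)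

lemma psd_on_subset: "psd_on I M \<Longrightarrow> J \<subseteq> I \<Longrightarrow> psd_on J M"
  unfolding psd_on_def supported_on_def by blast

lemma vinner_op_apply_two_basis_vecs:
  "vinner (op_apply M (\<lambda>x. a * basis_vec i x + b * basis_vec j x))
      (\<lambda>x. a * basis_vec i x + b * basis_vec j x)
     = cnj a * (a * M i i + b * M i j) + cnj b * (a * M j i + b * M j j)"
  unfolding op_apply_add op_apply_scale op_apply_basis_vec vinner_add_right vinner_scale_right
  by (simp add: algebra_simps)

lemma psd_on_two_basis_vecs:
  assumes "psd_on I M" "i \<in> I" "j \<in> I"
  shows "Im (cnj a * (a * M i i + b * M i j) + cnj b * (a * M j i + b * M j j)) = 0"
    and "0 \<le> Re (cnj a * (a * M i i + b * M i j) + cnj b * (a * M j i + b * M j j))"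
proof -
  have "supported_on I (\<lambda>x. a * basis_vec i x + b * basis_vec j x)"
    using assms(2,3) unfolding supported_on_def basis_vec_def by auto
  then show "Im (cnj a * (a * M i i + b * M i j) + cnj b * (a * M j i + b * M j j)) = 0"
    and "0 \<le> Re (cnj a * (a * M i i + b * M i j) + cnj b * (a * M j i + b * M j j))"
    using assms(1) unfolding psd_on_def vinner_op_apply_two_basis_vecs [symmetric] by auto
qed

lemma psd_on_diag:
  assumes "psd_on I M" "i \<in> I"
  shows "Im (M i i) = 0" "0 \<le> Re (M i i)"
  using psd_on_two_basis_vecs [OF assms assms(2), of 1 0] by simp_all

lemma psd_on_hermitian:
  assumes "psd_on I M" "i \<in> I" "j \<in> I"
  shows "M j i = cnj (M i j)"
proof -
  have "Im (M i i + M i j + M j i + M j j) = 0"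
    using psd_on_two_basis_vecs (1) [OF assms, of 1 1] by simp
  moreover have "Im (M i i + \<i> * M i j - \<i> * M j i + M j j) = 0"
    using psd_on_two_basis_vecs (1) [OF assms, of 1 \<i>] by (simp add: algebra_simps)
  ultimately show ?thesis
    using psd_on_diag (1) [OF assms(1,2)] psd_on_diag (1) [OF assms(1,3)]
    by (intro complex_eqI) auto
qed

text \<open>The form of M at -s M_ij e_i + e_j is M_jj - 2 s |M_ij|^2, negative for large real s.\<close>
lemma psd_on_diag_zero:
  assumes "psd_on I M" "i \<in> I" "j \<in> I" "M i i = 0"
  shows "M i j = 0"
proof (rule ccontr)
  assume "M i j \<noteq> 0"
  define m where "m = (cmod (M i j))\<^sup>2"
  define s where "s = (Re (M j j) + 1) / (2 * m)"
  have "m > 0" unfolding m_def using \<open>M i j \<noteq> 0\<close> by simp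
  have "cnj (- s * M i j) * (- s * M i j * M i i + 1 * M i j)
        + cnj 1 * (- s * M i j * M j i + 1 * M j j)
      = M j j - 2 * complex_of_real s * (M i j * cnj (M i j))"
    using psd_on_hermitian [OF assms(1-3)] assms(4) by (simp add: algebra_simps)
  also have "\<dots> = M j j - complex_of_real (2 * s * m)"
    unfolding m_def complex_norm_square [symmetric] by simp
  finally have "0 \<le> Re (M j j - complex_of_real (2 * s * m))"
    using psd_on_two_basis_vecs (2) [OF assms(1-3), of "- s * M i j" 1] by metis
  moreover have "2 * s * m = Re (M j j) + 1" unfolding s_def using \<open>m > 0\<close> by simp
  ultimately show False by simp
qed

definition schur_complement :: "'i op \<Rightarrow> 'i \<Rightarrow> 'i op" where
  "schur_complement M k = (\<lambda>i j. M i j - M i k / M k k * M k j)"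

definition cholesky_column :: "'i op \<Rightarrow> 'i \<Rightarrow> 'i vec" where
  "cholesky_column M k = (\<lambda>i. M i k / complex_of_real (sqrt (Re (M k k))))"

text \<open>The form of the Schur complement at v is the form of M at v - ((M v)_k / M_kk) e_k.\<close>
lemma psd_on_schur_complement:
  assumes psd: "psd_on (insert k I) M"
  shows "psd_on I (schur_complement M k)"
proof (cases "M k k = 0")
  case True
  then show ?thesis
    using psd_on_subset [OF psd subset_insertI] by (simp add: schur_complement_def)
next
  case False
  define d where "d = M k k"
  have "cnj d = d" using psd_on_diag (1) [OF psd] unfolding d_def by (simp add: complex_eq_iff)
  show ?thesis
    unfolding psd_on_def
  proof (intro allI impI)
    fix v :: "'a vec" assume v: "supported_on I v"
    define s where "s = op_apply M v k"
    define t where "t = - s / d"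
    define w where "w = (\<lambda>x. v x + t * basis_vec k x)"
    have "vinner v (\<lambda>x. M x k) = s"
      unfolding vinner_def s_def op_apply_def
    proof (rule sum.cong)
      fix x show "v x * cnj (M x k) = M k x * v x"
        using v psd_on_hermitian [OF psd, of x k] unfolding supported_on_def by (cases "x \<in> I") auto
    qed simp
    then have vm: "vinner (\<lambda>x. M x k) v = cnj s" by (metis cnj_vinner)
    have schur_v: "op_apply (schur_complement M k) v = (\<lambda>x. op_apply M v x - s / d * M x k)"
      unfolding schur_complement_def op_apply_def s_def d_def
      by (simp add: fun_eq_iff algebra_simps sum_subtractf sum_distrib_left sum_divide_distrib)
    have "vinner (op_apply (schur_complement M k) v) v = vinner (op_apply M v) v - s / d * cnj s"
      unfolding schur_v vinner_diff_left vinner_scale_left vm ..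
    also have "\<dots> = vinner (op_apply M v) v + cnj t * s + t * cnj s + t * cnj t * d"
      unfolding t_def using False \<open>cnj d = d\<close> by (simp add: d_def field_simps)
    also have "\<dots> = vinner (op_apply M w) w"
      unfolding w_def op_apply_add op_apply_scale op_apply_basis_vec
      by (simp add: vinner_add_left vinner_add_right vinner_scale_left vinner_scale_right vm
          s_def d_def algebra_simps)
    finally show "Im (vinner (op_apply (schur_complement M k) v) v) = 0 \<and>
        0 \<le> Re (vinner (op_apply (schur_complement M k) v) v)"
      using psd v unfolding psd_on_def w_def supported_on_def basis_vec_def by auto
  qed
qed

lemma psd_on_cholesky_split:
  assumes psd: "psd_on (insert k I) M" and "i \<in> insert k I" "j \<in> insert k I"
  shows "M i j = schur_complement M k i j + cholesky_column M k i * cnj (cholesky_column M k j)"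
proof (cases "M k k = 0")
  case True
  then show ?thesis by (simp add: schur_complement_def cholesky_column_def)
next
  case False
  have "Im (M k k) = 0" "0 \<le> Re (M k k)" using psd_on_diag [OF psd] by auto
  then have "complex_of_real (sqrt (Re (M k k))) * complex_of_real (sqrt (Re (M k k))) = M k k"
    by (simp add: complex_eq_iff flip: of_real_mult)
  moreover have "cnj (M j k) = M k j" using psd_on_hermitian [OF psd, of k j] assms(3) by simp
  ultimately show ?thesis
    using False unfolding schur_complement_def cholesky_column_def by (simp add: field_simps)
qed

lemma schur_complement_pivot_zero:
  assumes psd: "psd_on (insert k I) M" and j: "j \<in> insert k I"
  shows "schur_complement M k k j = 0" "schur_complement M k j k = 0"
proof -
  have "M k k = 0 \<Longrightarrow> M k j = 0" using psd_on_diag_zero [OF psd _ j] by simp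
  moreover have "M j k = cnj (M k j)" using psd_on_hermitian [OF psd _ j] by simp
  ultimately show "schur_complement M k k j = 0" "schur_complement M k j k = 0"
    unfolding schur_complement_def by auto
qed

text \<open>Cholesky step: the Schur complement is factored with vectors supported on S - {l},
  and the Cholesky column is put into coordinate l.\<close>
lemma ex_gram_factor_on:
  assumes "finite I" "card I \<le> card S" "psd_on I M"
  shows "\<exists>p. (\<forall>i\<in>I. supported_on S (p i)) \<and> (\<forall>i\<in>I. \<forall>j\<in>I. M i j = vinner (p i) (p j))"
  using assms
proof (induction I arbitrary: S M rule: finite_induct)
  case (insert k I)
  from insert.prems(1) insert.hyps obtain l where l: "l \<in> S" by fastforce
  with insert.prems(1) insert.hyps have "card I \<le> card (S - {l})" by simp
  then obtain p where p: "\<forall>i\<in>I. supported_on (S - {l}) (p i)"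
    "\<forall>i\<in>I. \<forall>j\<in>I. schur_complement M k i j = vinner (p i) (p j)"
    using insert.IH psd_on_schur_complement [OF insert.prems(2)] by blast
  define c where "c = cholesky_column M k"
  define P where "P i = (\<lambda>x. (if i = k then 0 else p i x) + c i * basis_vec l x)" for i
  have "M i j = vinner (P i) (P j)" if "i \<in> insert k I" "j \<in> insert k I" for i j
  proof -
    have "schur_complement M k i j =
        vinner (\<lambda>x. if i = k then 0 else p i x) (\<lambda>x. if j = k then 0 else p j x)"
      using that p(2) schur_complement_pivot_zero [OF insert.prems(2)] insert.hyps(2)
      by (cases "i = k"; cases "j = k") auto
    moreover have "p i l = 0" if "i \<in> I" for i using p(1) that unfolding supported_on_def by simp
    ultimately show ?thesis
      using psd_on_cholesky_split [OF insert.prems(2) that] that unfolding P_def c_def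
      by (auto simp: vinner_add_left vinner_add_right vinner_scale_left vinner_scale_right)
  qed
  moreover have "\<forall>i\<in>insert k I. supported_on S (P i)"
    using p(1) l unfolding P_def supported_on_def basis_vec_def by auto
  ultimately show ?case by blast
qed simp

lemma psd_gram: "psd (gram p)"
  unfolding psd_def Let_def
proof
  fix x
  define y where "y = (\<lambda>c. \<Sum>k\<in>UNIV. cnj (x k) * p k c)"
  have "(\<Sum>k\<in>UNIV. cnj (x k) * op_apply (gram p) x k) = vinner y y"
    unfolding y_def vinner_sum_left vinner_sum_right vinner_scale_left vinner_scale_right
      op_apply_def gram_def
    by (simp add: sum_distrib_left mult_ac)
  then show "Im (\<Sum>k\<in>UNIV. cnj (x k) * op_apply (gram p) x k) = 0 \<and>
      0 \<le> Re (\<Sum>k\<in>UNIV. cnj (x k) * op_apply (gram p) x k)"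
    by (simp add: vinner_self)
qed

lemma gram_lincomb:
  "gram (\<lambda>i x. \<Sum>k\<in>UNIV. L i k * p k x) = op_mult (op_mult L (gram p)) (op_adj L)"
  unfolding gram_def op_mult_def op_adj_def
  by (rule ext)+ (simp add: vinner_sum_left vinner_sum_right vinner_scale_left vinner_scale_right
      sum_distrib_left sum_distrib_right mult_ac, subst sum.swap, simp)

lemma ex_gram_eq:
  assumes "psd M" "card (UNIV :: 'k set) \<le> card (UNIV :: 'i set)"
  shows "\<exists>p :: 'k::finite \<Rightarrow> ('i::finite) vec. gram p = M"
  using ex_gram_factor_on [of UNIV UNIV M] assms psd_imp_psd_on unfolding gram_def by fastforce

section \<open>States of the three-party system\<close>

definition row_BC :: "('a \<times> 'b \<times> 'c) vec \<Rightarrow> 'a \<Rightarrow> ('b \<times> 'c) vec" where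
  "row_BC v a = (\<lambda>bc. v (a, bc))"

definition col_C :: "('a \<times> 'b \<times> 'c) vec \<Rightarrow> 'a \<times> 'b \<Rightarrow> 'c vec" where
  "col_C v ab = (\<lambda>c. v (fst ab, snd ab, c))"

lemma ptrace_BC_ketbra_eq_gram_row_BC: "ptrace_BC (ketbra v) = gram (row_BC v)"
  unfolding ptrace_BC_def ketbra_def gram_def vinner_def row_BC_def ..

lemma ptrace_BC_ketbra_eq_ptrace_B_gram: "ptrace_BC (ketbra v) = ptrace_B (gram (col_C v))"
  unfolding ptrace_BC_def ptrace_B_def ketbra_def gram_def vinner_def col_C_def
  by (simp add: fun_eq_iff sum.cartesian_product)

lemma row_BC_apply_BC: "row_BC (apply_BC U v) a = op_apply U (row_BC v a)"
  unfolding row_BC_def apply_BC_def op_apply_def by (simp add: case_prod_beta)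

lemma col_C_apply_AB: "col_C (apply_AB L v) = (\<lambda>i c. \<Sum>k\<in>UNIV. L i k * col_C v k c)"
  unfolding col_C_def apply_AB_def by (simp add: case_prod_beta)

lemma ex_col_C_gram_eq:
  fixes \<pi> :: "('a::finite \<times> 'b::finite) op"
  assumes "psd \<pi>" "card (UNIV :: ('a \<times> 'b) set) \<le> card (UNIV :: 'c::finite set)"
  shows "\<exists>v :: ('a \<times> 'b \<times> 'c) vec. gram (col_C v) = \<pi>"
proof -
  obtain p :: "'a \<times> 'b \<Rightarrow> 'c vec" where "gram p = \<pi>" using ex_gram_eq [OF assms] by blast
  moreover have "col_C (\<lambda>(a, b, c). p (a, b) c) = p" unfolding col_C_def by simp
  ultimately have "gram (col_C (\<lambda>(a, b, c). p (a, b) c)) = \<pi>" by simp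
  then show ?thesis by (rule exI [where x = "\<lambda>(a, b, c). p (a, b) c"])
qed

lemma ex_unitary_apply_BC_iff:
  fixes x y :: "('a::finite \<times> 'b::finite \<times> 'c::finite) vec"
  assumes "card (UNIV :: 'a set) \<le> card (UNIV :: ('b \<times> 'c) set)"
  shows "(\<exists>U. unitary_op U \<and> apply_BC U x = y) \<longleftrightarrow>
    ptrace_BC (ketbra x) = ptrace_BC (ketbra y)"
proof
  assume "\<exists>U. unitary_op U \<and> apply_BC U x = y"
  then show "ptrace_BC (ketbra x) = ptrace_BC (ketbra y)"
    unfolding ptrace_BC_ketbra_eq_gram_row_BC gram_def
    by (auto simp: row_BC_apply_BC vinner_unitary)
next
  assume "ptrace_BC (ketbra x) = ptrace_BC (ketbra y)"
  then obtain U where "unitary_op U" "\<forall>a. op_apply U (row_BC x a) = row_BC y a"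
    using ex_unitary_map_if_gram_eq [OF assms] unfolding ptrace_BC_ketbra_eq_gram_row_BC
    by blast
  moreover from this(2) have "apply_BC U x = y"
    unfolding row_BC_apply_BC [symmetric] by (simp add: row_BC_def fun_eq_iff)
  ultimately show "\<exists>U. unitary_op U \<and> apply_BC U x = y" by blast
qed

lemma ex_run_alg_eq_iff:
  "(\<exists>Us. (\<forall>j\<le>T. unitary_op (Us j)) \<and> run_alg L Us T \<xi> = \<tau>) \<longleftrightarrow>
   (\<exists>w. w T = \<tau> \<and> (\<exists>U. unitary_op U \<and> apply_BC U \<xi> = w 0) \<and>
      (\<forall>j<T. \<exists>U. unitary_op U \<and> apply_BC U (apply_AB L (w j)) = w (Suc j)))"
proof
  assume "\<exists>Us. (\<forall>j\<le>T. unitary_op (Us j)) \<and> run_alg L Us T \<xi> = \<tau>"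
  then obtain Us where "\<forall>j\<le>T. unitary_op (Us j)" "run_alg L Us T \<xi> = \<tau>" by blast
  then show "\<exists>w. w T = \<tau> \<and> (\<exists>U. unitary_op U \<and> apply_BC U \<xi> = w 0) \<and>
      (\<forall>j<T. \<exists>U. unitary_op U \<and> apply_BC U (apply_AB L (w j)) = w (Suc j))"
    by (intro exI [of _ "\<lambda>j. run_alg L Us j \<xi>"] conjI allI impI exI) (auto simp: Suc_le_eq)
next
  assume "\<exists>w. w T = \<tau> \<and> (\<exists>U. unitary_op U \<and> apply_BC U \<xi> = w 0) \<and>
      (\<forall>j<T. \<exists>U. unitary_op U \<and> apply_BC U (apply_AB L (w j)) = w (Suc j))"
  then obtain w U0 V where w: "w T = \<tau>" "unitary_op U0" "apply_BC U0 \<xi> = w 0"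
    "\<forall>j<T. unitary_op (V j) \<and> apply_BC (V j) (apply_AB L (w j)) = w (Suc j)"
    by metis
  define Us where "Us j = (case j of 0 \<Rightarrow> U0 | Suc i \<Rightarrow> V i)" for j
  have "run_alg L Us j \<xi> = w j" if "j \<le> T" for j
    using that by (induction j) (simp_all add: Us_def w)
  moreover have "\<forall>j\<le>T. unitary_op (Us j)"
    using w(2,4) by (auto simp: Us_def split: nat.split)
  ultimately show "\<exists>Us. (\<forall>j\<le>T. unitary_op (Us j)) \<and> run_alg L Us T \<xi> = \<tau>"
    using w(1) by blast
qed

lemma transformable_iff_states:
  fixes \<xi> \<tau> :: "('a::finite \<times> 'b::finite \<times> 'c::finite) vec"
  assumes "card (UNIV :: 'a set) \<le> card (UNIV :: ('b \<times> 'c) set)"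
  shows "transformable L T \<xi> \<tau> \<longleftrightarrow>
    (\<exists>w. w T = \<tau> \<and> ptrace_BC (ketbra \<xi>) = ptrace_BC (ketbra (w 0)) \<and>
       (\<forall>j<T. ptrace_BC (ketbra (apply_AB L (w j))) = ptrace_BC (ketbra (w (Suc j)))))"
  unfolding transformable_def ex_run_alg_eq_iff ex_unitary_apply_BC_iff [OF assms] ..

lemma ex_psd_chain_if_states:
  assumes "T \<ge> 1" "w T = \<tau>" "ptrace_BC (ketbra \<xi>) = ptrace_BC (ketbra (w 0))"
    and "\<forall>j<T. ptrace_BC (ketbra (apply_AB L (w j))) = ptrace_BC (ketbra (w (Suc j)))"
  shows "\<exists>\<pi>.
       (\<forall>j<T. psd (\<pi> j)) \<and>
       (\<forall>j. j + 2 \<le> T \<longrightarrow>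
          ptrace_B (\<pi> (Suc j)) = ptrace_B (op_mult (op_mult L (\<pi> j)) (op_adj L))) \<and>
       ptrace_BC (ketbra \<xi>) = ptrace_B (\<pi> 0) \<and>
       ptrace_BC (ketbra \<tau>) = ptrace_B (op_mult (op_mult L (\<pi> (T - 1))) (op_adj L))"
proof -
  define \<pi> where "\<pi> j = gram (col_C (w j))" for j
  have step: "ptrace_B (op_mult (op_mult L (\<pi> j)) (op_adj L)) = ptrace_B (\<pi> (Suc j))"
    if "j < T" for j
    using assms(4) that unfolding \<pi>_def
    by (simp add: ptrace_BC_ketbra_eq_ptrace_B_gram col_C_apply_AB gram_lincomb)
  show ?thesis
  proof (intro exI [of _ \<pi>] conjI allI impI)
    show "psd (\<pi> j)" for j unfolding \<pi>_def by (rule psd_gram)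
    show "ptrace_B (\<pi> (Suc j)) = ptrace_B (op_mult (op_mult L (\<pi> j)) (op_adj L))"
      if "j + 2 \<le> T" for j
      using step that by simp
    show "ptrace_BC (ketbra \<xi>) = ptrace_B (\<pi> 0)"
      using assms(3) unfolding \<pi>_def ptrace_BC_ketbra_eq_ptrace_B_gram .
    show "ptrace_BC (ketbra \<tau>) = ptrace_B (op_mult (op_mult L (\<pi> (T - 1))) (op_adj L))"
      using step [of "T - 1"] assms(1,2) unfolding \<pi>_def ptrace_BC_ketbra_eq_ptrace_B_gram
      by simp
  qed
qed

lemma ex_states_if_psd_chain:
  fixes \<pi> :: "nat \<Rightarrow> ('a::finite \<times> 'b::finite) op" and \<xi> \<tau> :: "('a \<times> 'b \<times> 'c::finite) vec"
  assumes "card (UNIV :: ('a \<times> 'b) set) \<le> card (UNIV :: 'c set)" "T \<ge> 1"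
    and "\<forall>j<T. psd (\<pi> j)"
    and "\<forall>j. j + 2 \<le> T \<longrightarrow>
      ptrace_B (\<pi> (Suc j)) = ptrace_B (op_mult (op_mult L (\<pi> j)) (op_adj L))"
    and "ptrace_BC (ketbra \<xi>) = ptrace_B (\<pi> 0)"
    and "ptrace_BC (ketbra \<tau>) = ptrace_B (op_mult (op_mult L (\<pi> (T - 1))) (op_adj L))"
  shows "\<exists>w. w T = \<tau> \<and> ptrace_BC (ketbra \<xi>) = ptrace_BC (ketbra (w 0)) \<and>
    (\<forall>j<T. ptrace_BC (ketbra (apply_AB L (w j))) = ptrace_BC (ketbra (w (Suc j))))"
proof -
  have "\<forall>j. \<exists>v :: ('a \<times> 'b \<times> 'c) vec. j < T \<longrightarrow> gram (col_C v) = \<pi> j"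
    using ex_col_C_gram_eq [OF _ assms(1)] assms(3) by blast
  then obtain v :: "nat \<Rightarrow> ('a \<times> 'b \<times> 'c) vec"
    where v: "\<And>j. j < T \<Longrightarrow> gram (col_C (v j)) = \<pi> j" by metis
  define w where "w j = (if j < T then v j else \<tau>)" for j
  have "ptrace_BC (ketbra (apply_AB L (w j))) = ptrace_BC (ketbra (w (Suc j)))" if "j < T" for j
  proof (cases "Suc j < T")
    case True
    then show ?thesis using that assms(4) v
      by (simp add: w_def ptrace_BC_ketbra_eq_ptrace_B_gram col_C_apply_AB gram_lincomb)
  next
    case False
    then have "j = T - 1" using that by simp
    then show ?thesis using that assms(6) v
      by (simp add: w_def ptrace_BC_ketbra_eq_ptrace_B_gram col_C_apply_AB gram_lincomb)
  qed
  moreover have "ptrace_BC (ketbra \<xi>) = ptrace_BC (ketbra (w 0))"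
    using assms(2,5) v unfolding w_def ptrace_BC_ketbra_eq_ptrace_B_gram by simp
  moreover have "w T = \<tau>" unfolding w_def by simp
  ultimately show ?thesis by blast
qed

theorem proposition1:
  fixes L :: "('a::finite \<times> 'b::finite) op"
    and \<xi> \<tau> :: "('a \<times> 'b \<times> 'c::finite) vec"
    and T :: nat
  assumes "card (UNIV :: 'c set) \<ge> card (UNIV :: 'a set) * card (UNIV :: 'b set)"
    and "subunitary L"
    and "\<xi> \<noteq> (\<lambda>_. 0)"
    and "T \<ge> 1"
  shows "transformable L T \<xi> \<tau> \<longleftrightarrow>
    (\<exists>\<pi> :: nat \<Rightarrow> ('a \<times> 'b) op.
       (\<forall>j<T. psd (\<pi> j)) \<and>
       (\<forall>j. j + 2 \<le> T \<longrightarrow>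
          ptrace_B (\<pi> (Suc j)) = ptrace_B (op_mult (op_mult L (\<pi> j)) (op_adj L))) \<and>
       ptrace_BC (ketbra \<xi>) = ptrace_B (\<pi> 0) \<and>
       ptrace_BC (ketbra \<tau>) = ptrace_B (op_mult (op_mult L (\<pi> (T - 1))) (op_adj L)))"
proof -
  have card_B: "1 \<le> card (UNIV :: 'b set)" by (simp add: Suc_le_eq card_gt_0_iff)
  have card_AB: "card (UNIV :: ('a \<times> 'b) set) \<le> card (UNIV :: 'c set)"
    using assms(1) by (simp flip: UNIV_Times_UNIV add: card_cartesian_product)
  have "card (UNIV :: 'a set) \<le> card (UNIV :: 'a set) * card (UNIV :: 'b set)"
    using card_B by simp
  also have "\<dots> \<le> card (UNIV :: 'c set)" by (rule assms(1))
  also have "\<dots> \<le> card (UNIV :: 'b set) * card (UNIV :: 'c set)" using card_B by simp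
  finally have card_A: "card (UNIV :: 'a set) \<le> card (UNIV :: ('b \<times> 'c) set)"
    by (simp flip: UNIV_Times_UNIV add: card_cartesian_product)
  show ?thesis
    unfolding transformable_iff_states [OF card_A]
    by (intro iffI; elim exE conjE)
      (rule ex_psd_chain_if_states [OF assms(4)] ex_states_if_psd_chain [OF card_AB assms(4)];
        assumption)+
qed

end
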